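(* Let $\mathbb F$ be a field and let $(S_1,m_1),\dots,(S_n,m_n)$ be finite multisets in $\mathbb F$ such that $0\in S_i$ and $m_i(0)=1$ for every $i$. Put $S=S_1\times\dots\times S_n$ and $d(S_i)=\sum_{s\in S_i}m_i(s)$. Let $H_1,\dots,H_k$ be hyperplanes in $\mathbb F^n$ such that every point $\mathbf s\in S\setminus\{\mathbf 0\}$ is contained in at least $|m(\mathbf s)|-n+1$ of the hyperplanes $H_1,\dots,H_k$, and $\mathbf 0$ is contained in none of them. Then $k\ge d(S_1)+\dots+d(S_n)-n$.
   Context: A multiset $(S_i,m_i)$ consists of a nonempty finite subset $S_i\subseteq\mathbb F$ and multiplicities $m_i:S_i\to\{1,2,\dots\}$. For $\mathbf s=(s_1,\dots,s_n)\in S$, $|m(\mathbf s)|=m_1(s_1)+\dots+m_n(s_n)$. A hyperplane in $\mathbb F^n$ is the zero set of a polynomial $a_1x_1+\dots+a_nx_n-b$ with $a_i,b\in\mathbb F$, not all $a_i$ zero. *)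

theory Defs
  imports "HOL-Library.FuncSet"
begin

text \<open>Points of F^n are functions nat => F restricted to the index set {..<n}
 (extensional, via PiE).\<close>

definition on_hyperplane :: "nat \<Rightarrow> (nat \<Rightarrow> 'a::field) \<Rightarrow> 'a \<Rightarrow> (nat \<Rightarrow> 'a) \<Rightarrow> bool" where
  "on_hyperplane n a b x \<longleftrightarrow> (\<Sum>i<n. a i * x i) = b"

definition is_hyperplane :: "nat \<Rightarrow> (nat \<Rightarrow> 'a::field) \<Rightarrow> bool" where
  "is_hyperplane n a \<longleftrightarrow> (\<exists>i<n. a i \<noteq> 0)"

end

theory Submission
  imports Defs "HOL-Computational_Algebra.Polynomial"
begin

text \<open>Suppose \<open>k < \<Sum>\<^sub>i (d(S\<^sub>i) - 1)\<close> and let \<open>Q(x) = \<Prod>\<^sub>j (a\<^sub>j \<cdot> x - b\<^sub>j)\<close>, a polynomial of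
  degree \<open>k\<close> with \<open>Q(0) \<noteq> 0\<close>. For one multiset \<open>(S\<^sub>i, m\<^sub>i)\<close>, a univariate polynomial of degree
  \<open>< d(S\<^sub>i)\<close> is determined by its Hermite data, the Hasse derivatives \<open>D\<^sup>j f(t)\<close> for \<open>t \<in> S\<^sub>i\<close>
  and \<open>j < m\<^sub>i(t)\<close>. Reading off the top coefficient of the Hermite interpolant is therefore a
  linear functional \<open>c\<^sub>i\<close> on the data which kills all polynomials of degree \<open>< d(S\<^sub>i) - 1\<close>; since
  \<open>m\<^sub>i(0) = 1\<close>, testing it on \<open>\<Prod>\<^sub>t\<^sub>\<noteq>\<^sub>0 (x - t)\<^bsup>m\<^sub>i(t)\<^esup>\<close> shows \<open>c\<^sub>i(0,0) \<noteq> 0\<close>.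

  Now pair the tensor product of the \<open>c\<^sub>i\<close> with the multivariate Hermite data of \<open>Q\<close> on the grid
  \<open>S\<close>. Expanding \<open>Q\<close> into monomials, each monomial \<open>x\<^sup>e\<close> of degree \<open>\<le> k\<close> has some
  \<open>e\<^sub>i < d(S\<^sub>i) - 1\<close>, so the pairing is \<open>0\<close>. On the other hand the covering hypothesis makes
  every derivative \<open>D\<^sup>\<alpha> Q(s)\<close> with \<open>\<alpha>\<^sub>i < m\<^sub>i(s\<^sub>i)\<close> vanish at \<open>s \<noteq> 0\<close>, so the pairing equals
  \<open>\<Prod>\<^sub>i c\<^sub>i(0,0) \<cdot> Q(0) \<noteq> 0\<close>.\<close>

section \<open>Taylor coefficients of univariate polynomials\<close>

text \<open>The coefficient of \<open>(x - t)\<^sup>j\<close> in \<open>p\<close>, i.e.\ the \<open>j\<close>-th Hasse derivative of \<open>p\<close> at \<open>t\<close>.\<close>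

definition taylor_coeff :: "'a::field poly \<Rightarrow> 'a \<Rightarrow> nat \<Rightarrow> 'a" where
  "taylor_coeff p t j = coeff (pcompose p [:t, 1:]) j"

lemma taylor_coeff_diff: "taylor_coeff (p - q) t j = taylor_coeff p t j - taylor_coeff q t j"
  by (simp add: taylor_coeff_def pcompose_diff)

lemma taylor_coeff_smult: "taylor_coeff (smult c p) t j = c * taylor_coeff p t j"
  by (simp add: taylor_coeff_def pcompose_smult)

lemma taylor_coeff_sum: "taylor_coeff (sum f A) t j = (\<Sum>x\<in>A. taylor_coeff (f x) t j)"
  by (simp add: taylor_coeff_def pcompose_sum coeff_sum)

lemma taylor_coeff_1: "taylor_coeff 1 t j = (if j = 0 then 1 else 0)"
  by (simp add: taylor_coeff_def pcompose_1)

lemma taylor_coeff_monom_Suc: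
  "taylor_coeff (monom 1 (Suc e)) t j =
    (if j = 0 then 0 else taylor_coeff (monom 1 e) t (j - 1)) + t * taylor_coeff (monom 1 e) t j"
  by (simp add: taylor_coeff_def monom_Suc pcompose_pCons coeff_pCons')

lemma pcompose_power: "pcompose (p ^ k) q = pcompose p q ^ k"
  by (induction k) (simp_all add: pcompose_mult pcompose_1)

lemma pcompose_translations: "pcompose [:a, 1:] [:b, 1:] = [:a + b, 1::'a::comm_ring_1:]"
  by (simp add: pcompose_pCons)

lemma pcompose_power_linear_shift: "pcompose ([:-t, 1:] ^ k) [:t, 1:] = monom (1::'a::field) k"
  by (simp add: pcompose_power pcompose_translations monom_altdef)

lemma power_linear_dvd_iff_taylor_coeff:
  "[:-t, 1:] ^ m dvd p \<longleftrightarrow> (\<forall>j<m. taylor_coeff p t j = 0)"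
proof -
  have "[:-t, 1:] ^ m dvd p \<longleftrightarrow> monom 1 m dvd pcompose p [:t, 1:]"
  proof
    assume "[:-t, 1:] ^ m dvd p"
    then show "monom 1 m dvd pcompose p [:t, 1:]"
      by (metis dvd_def pcompose_mult pcompose_power_linear_shift)
  next
    assume "monom 1 m dvd pcompose p [:t, 1:]"
    then obtain q where q: "pcompose p [:t, 1:] = monom 1 m * q" by blast
    have "p = pcompose (pcompose p [:t, 1:]) [:-t, 1:]"
      by (simp add: pcompose_assoc[symmetric] pcompose_translations)
    also have "\<dots> = [:-t, 1:] ^ m * pcompose q [:-t, 1:]"
      by (simp add: q pcompose_mult monom_altdef pcompose_power pcompose_translations)
    finally show "[:-t, 1:] ^ m dvd p" by (metis dvd_triv_left)
  qed
  then show ?thesis by (simp add: monom_1_dvd_iff' taylor_coeff_def)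
qed

section \<open>Hermite interpolation\<close>

lemma prod_power_linear_dvd:
  assumes "finite A" "\<And>u. u \<in> A \<Longrightarrow> [:-u, 1:] ^ m u dvd p"
  shows "(\<Prod>u\<in>A. [:-u, 1::'a::field:] ^ m u) dvd p"
  using assms
proof (induction A arbitrary: p rule: finite_induct)
  case empty
  then show ?case by simp
next
  case (insert x A)
  show ?case
  proof (cases "p = 0")
    case False
    obtain q where q: "p = [:-x, 1:] ^ m x * q" using insert.prems by blast
    have "[:-u, 1:] ^ m u dvd q" if "u \<in> A" for u
    proof -
      have "m u \<le> order u p" using insert.prems[of u] that False by (simp add: order_divides)
      also have "\<dots> = order u ([:-x, 1:] ^ m x) + order u q"
        using q False by (simp add: order_mult)
      also have "order u ([:-x, 1:] ^ m x) = 0"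
        using that insert.hyps by (intro order_0I) auto
      finally show ?thesis by (simp add: order_divides)
    qed
    then show ?thesis using insert.hyps insert.IH q by (simp add: mult_dvd_mono)
  qed simp
qed

lemma degree_prod_power_linear:
  "finite A \<Longrightarrow> degree (\<Prod>u\<in>A. [:-u, 1::'a::field:] ^ m u) = (\<Sum>u\<in>A. m u)"
  by (subst degree_prod_sum_eq) (auto simp: degree_linear_power)

lemma poly_eq_0_if_taylor_coeffs_eq_0:
  fixes p :: "'a::field poly"
  assumes "finite S" "degree p < (\<Sum>u\<in>S. m u)"
    and "\<And>u j. u \<in> S \<Longrightarrow> j < m u \<Longrightarrow> taylor_coeff p u j = 0"
  shows "p = 0"
proof (rule ccontr)
  assume "p \<noteq> 0"
  have "(\<Prod>u\<in>S. [:-u, 1:] ^ m u) dvd p"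
    using assms by (intro prod_power_linear_dvd) (auto simp: power_linear_dvd_iff_taylor_coeff)
  then have "degree (\<Prod>u\<in>S. [:-u, 1:] ^ m u) \<le> degree p"
    using \<open>p \<noteq> 0\<close> by (rule dvd_imp_degree_le)
  then show False using assms by (simp add: degree_prod_power_linear)
qed

lemma exists_truncated_inverse:
  assumes "coeff p 0 \<noteq> (0::'a::field)"
  shows "\<exists>w. \<forall>j<N. coeff (p * w) j = (if j = 0 then 1 else 0)"
proof (induction N)
  case (Suc N)
  then obtain w where w: "\<forall>j<N. coeff (p * w) j = (if j = 0 then 1 else 0)" by blast
  define c where "c = (if N = 0 then 1 else 0) - coeff (p * w) N"
  define w' where "w' = w + monom (c / coeff p 0) N"
  have "coeff (p * w') j = coeff (p * w) j + (if j < N then 0 else c / coeff p 0 * coeff p (j - N))"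
    for j
    unfolding w'_def by (simp add: distrib_left mult.commute[of p "monom _ _"] coeff_monom_mult)
  then have "\<forall>j<Suc N. coeff (p * w') j = (if j = 0 then 1 else 0)"
    using w assms by (auto simp: c_def less_Suc_eq)
  then show ?case by blast
qed simp

lemma hermite_basis_exists:
  fixes S :: "'a::field set"
  assumes "finite S" "t \<in> S" "i < m t"
  shows "\<exists>\<phi>. degree \<phi> < (\<Sum>u\<in>S. m u) \<and>
    (\<forall>u\<in>S. \<forall>j<m u. taylor_coeff \<phi> u j = (if u = t \<and> j = i then 1 else 0))"
proof -
  define h where "h = (\<Prod>u\<in>S - {t}. [:-u, 1:] ^ m u)"
  define G where "G = (\<Prod>u\<in>S. [:-u, 1:] ^ m u)"
  have "poly h t \<noteq> 0" unfolding h_def using assms by (simp add: poly_prod)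
  then have "coeff (pcompose h [:t, 1:]) 0 \<noteq> 0" by simp
  then obtain w where w: "\<forall>j<m t. coeff (pcompose h [:t, 1:] * w) j = (if j = 0 then 1 else 0)"
    using exists_truncated_inverse by blast
  \<comment> \<open>\<open>\<psi>\<close> has the prescribed data: near \<open>t\<close> it is \<open>(x - t)^i\<close> times a truncated inverse of \<open>h\<close>,
    and at every other node it vanishes to the full order because \<open>h\<close> does.\<close>
  define \<psi> where "\<psi> = [:-t, 1:] ^ i * (h * pcompose w [:-t, 1:])"
  have \<psi>: "taylor_coeff \<psi> u j = (if u = t \<and> j = i then 1 else 0)" if "u \<in> S" "j < m u" for u j
  proof (cases "u = t")
    case True
    have "pcompose \<psi> [:t, 1:] = monom 1 i * (pcompose h [:t, 1:] * w)"
      by (simp add: \<psi>_def pcompose_mult pcompose_power_linear_shift pcompose_assoc[symmetric]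
          pcompose_translations)
    then show ?thesis using w that True by (auto simp: taylor_coeff_def coeff_monom_mult)
  next
    case False
    have "[:-u, 1:] ^ m u dvd h" unfolding h_def using that False assms by (intro dvd_prodI) auto
    then have "[:-u, 1:] ^ m u dvd \<psi>" unfolding \<psi>_def by (metis dvd_mult dvd_mult2)
    then show ?thesis using False that by (simp add: power_linear_dvd_iff_taylor_coeff)
  qed
  have G_nz: "G \<noteq> 0" and deg_G: "degree G = (\<Sum>u\<in>S. m u)"
    unfolding G_def using assms(1) by (auto simp: degree_prod_power_linear)
  have "degree (\<psi> mod G) < (\<Sum>u\<in>S. m u)"
    using assms degree_mod_less'[OF G_nz, of \<psi>] deg_G
    by (cases "\<psi> mod G = 0") (auto intro!: gr0I)
  moreover have "taylor_coeff (\<psi> mod G) u j = taylor_coeff \<psi> u j" if "u \<in> S" "j < m u" for u j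
  proof -
    have "[:-u, 1:] ^ m u dvd G" unfolding G_def using that assms by (intro dvd_prodI)
    then have "[:-u, 1:] ^ m u dvd G * (\<psi> div G)" by simp
    then have "taylor_coeff (G * (\<psi> div G)) u j = 0"
      using that by (simp add: power_linear_dvd_iff_taylor_coeff)
    then show ?thesis by (metis minus_div_mult_eq_mod mult.commute taylor_coeff_diff diff_zero)
  qed
  ultimately show ?thesis using \<psi> by (metis (no_types, lifting))
qed

lemma hermite_expansion:
  fixes S :: "'a::field set"
  assumes "finite S"
  shows "\<exists>\<phi>. \<forall>p. degree p < (\<Sum>u\<in>S. m u) \<longrightarrow>
    p = (\<Sum>t\<in>S. \<Sum>i<m t. smult (taylor_coeff p t i) (\<phi> t i))"
proof -
  define d where "d = (\<Sum>u\<in>S. m u)"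
  define basis where "basis t i \<phi> \<longleftrightarrow> degree \<phi> < d \<and>
    (\<forall>u\<in>S. \<forall>j<m u. taylor_coeff \<phi> u j = (if u = t \<and> j = i then 1 else 0))" for t i \<phi>
  define \<phi> where "\<phi> t i = (SOME \<phi>. basis t i \<phi>)" for t i
  have \<phi>: "basis t i (\<phi> t i)" if "t \<in> S" "i < m t" for t i
    unfolding \<phi>_def basis_def d_def using hermite_basis_exists[of S t i m, OF assms that] by (rule someI_ex)
  have "p = (\<Sum>t\<in>S. \<Sum>i<m t. smult (taylor_coeff p t i) (\<phi> t i))" if "degree p < d" for p
  proof -
    define q where "q = (\<Sum>t\<in>S. \<Sum>i<m t. smult (taylor_coeff p t i) (\<phi> t i))"
    have "degree q < d"
      using \<phi> that unfolding q_def basis_def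
      by (intro degree_sum_less assms finite_lessThan degree_smult_le[THEN le_less_trans]) auto
    moreover have "taylor_coeff (p - q) u j = 0" if "u \<in> S" "j < m u" for u j
    proof -
      have "taylor_coeff q u j = (\<Sum>t\<in>S. \<Sum>i<m t. taylor_coeff p t i * (if u = t \<and> j = i then 1 else 0))"
        using \<phi> that unfolding q_def basis_def by (simp add: taylor_coeff_sum taylor_coeff_smult)
      also have "\<dots> = (\<Sum>t\<in>S. if t = u then taylor_coeff p u j else 0)"
        using that by (intro sum.cong refl) (auto simp: if_distrib cong: if_cong)
      also have "\<dots> = taylor_coeff p u j"
        using that assms by simp
      finally show ?thesis by (simp add: taylor_coeff_diff)
    qed
    ultimately have "p - q = 0"
      using that assms unfolding d_def by (intro poly_eq_0_if_taylor_coeffs_eq_0[where m = m]) (auto intro: degree_diff_less)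
    then show ?thesis by (simp add: q_def)
  qed
  then show ?thesis unfolding d_def by blast
qed

definition annihilates_degree_below :: "'a::field set \<Rightarrow> ('a \<Rightarrow> nat) \<Rightarrow> ('a \<Rightarrow> nat \<Rightarrow> 'a) \<Rightarrow> nat \<Rightarrow> bool" where
  "annihilates_degree_below S m c r \<longleftrightarrow>
    (\<forall>p. degree p < r \<longrightarrow> (\<Sum>t\<in>S. \<Sum>i<m t. c t i * taylor_coeff p t i) = 0)"

lemma hermite_functional_exists:
  fixes S :: "'a::field set"
  assumes "finite S" "0 \<in> S" "m 0 = 1"
  shows "\<exists>c. c 0 0 \<noteq> 0 \<and> annihilates_degree_below S m c ((\<Sum>t\<in>S. m t) - 1)"
proof -
  define d where "d = (\<Sum>t\<in>S. m t)"
  obtain \<phi> where \<phi>: "\<And>p. degree p < d \<Longrightarrow> p = (\<Sum>t\<in>S. \<Sum>i<m t. smult (taylor_coeff p t i) (\<phi> t i))"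
    using hermite_expansion[OF assms(1)] unfolding d_def by blast
  define c where "c t i = coeff (\<phi> t i) (d - 1)" for t i
  have top_coeff: "coeff p (d - 1) = (\<Sum>t\<in>S. \<Sum>i<m t. c t i * taylor_coeff p t i)" if "degree p < d" for p
    by (subst \<phi>[OF that]) (simp add: coeff_sum c_def mult.commute)
  have d_eq: "d = 1 + (\<Sum>t\<in>S - {0}. m t)"
    unfolding d_def using assms by (simp add: sum.remove)
  define h where "h = (\<Prod>u\<in>S - {0}. [:-u, 1::'a:] ^ m u)"
  have deg_h: "degree h = d - 1" unfolding h_def d_eq using assms by (simp add: degree_prod_power_linear)
  have lead_h: "lead_coeff h = 1" unfolding h_def by (simp add: lead_coeff_prod lead_coeff_power)
  have "taylor_coeff h t i = 0" if "t \<in> S - {0}" "i < m t" for t i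
  proof -
    have "[:-t, 1:] ^ m t dvd h" unfolding h_def using that assms by (intro dvd_prodI) auto
    then show ?thesis using that by (simp add: power_linear_dvd_iff_taylor_coeff)
  qed
  then have "coeff h (d - 1) = c 0 0 * poly h 0"
    using top_coeff[of h] deg_h d_eq assms by (simp add: sum.remove taylor_coeff_def poly_0_coeff_0)
  then have "c 0 0 \<noteq> 0" using lead_h deg_h by auto
  moreover have "annihilates_degree_below S m c (d - 1)"
    unfolding annihilates_degree_below_def
  proof (intro allI impI)
    fix p :: "'a poly"
    assume "degree p < d - 1"
    then have "degree p < d" and "coeff p (d - 1) = 0" by (auto intro: coeff_eq_0)
    then show "(\<Sum>t\<in>S. \<Sum>i<m t. c t i * taylor_coeff p t i) = 0" using top_coeff by simp
  qed
  ultimately show ?thesis unfolding d_def by blast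
qed

section \<open>Taylor coefficients of products of affine forms\<close>

text \<open>Multivariate polynomials are handled only through coefficient functions:
  \<open>affine_prod_taylor n a b k s \<alpha>\<close> is the coefficient of \<open>x\<^sup>\<alpha>\<close> in
  \<open>\<Prod>\<^sub>j\<^sub><\<^sub>k (a\<^sub>j \<cdot> (s + x) - b\<^sub>j)\<close>, i.e.\ the Hasse derivative \<open>D\<^sup>\<alpha>\<close> of the product at \<open>s\<close>;
  the recursion multiplies by the factor \<open>(a\<^sub>k \<cdot> s - b\<^sub>k) + \<Sum>\<^sub>i a\<^sub>k\<^sub>i x\<^sub>i\<close>.\<close>

fun affine_prod_taylor ::
  "nat \<Rightarrow> (nat \<Rightarrow> nat \<Rightarrow> 'a::field) \<Rightarrow> (nat \<Rightarrow> 'a) \<Rightarrow> nat \<Rightarrow> (nat \<Rightarrow> 'a) \<Rightarrow> (nat \<Rightarrow> nat) \<Rightarrow> 'a"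
where
  "affine_prod_taylor n a b 0 s \<alpha> = (if \<forall>i<n. \<alpha> i = 0 then 1 else 0)"
| "affine_prod_taylor n a b (Suc k) s \<alpha> =
     ((\<Sum>i<n. a k i * s i) - b k) * affine_prod_taylor n a b k s \<alpha> +
     (\<Sum>i<n. if \<alpha> i = 0 then 0 else a k i * affine_prod_taylor n a b k s (\<alpha>(i := \<alpha> i - 1)))"

lemma Suc_sum_fun_upd_pred:
  fixes \<alpha> :: "nat \<Rightarrow> nat"
  assumes "i < n" "\<alpha> i \<noteq> 0"
  shows "Suc (\<Sum>i'<n. (\<alpha>(i := \<alpha> i - 1)) i') = (\<Sum>i'<n. \<alpha> i')"
  using assms by (simp add: sum.remove[of "{..<n}" i])

lemma affine_prod_taylor_eq_0_if_on_hyperplanes: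
  "(\<Sum>i<n. \<alpha> i) < card {j. j < k \<and> on_hyperplane n (a j) (b j) s} \<Longrightarrow>
    affine_prod_taylor n a b k s \<alpha> = 0"
proof (induction k arbitrary: \<alpha>)
  case (Suc k)
  define Z where "Z = {j. j < k \<and> on_hyperplane n (a j) (b j) s}"
  have card_Suc: "card {j. j < Suc k \<and> on_hyperplane n (a j) (b j) s} =
      card Z + (if on_hyperplane n (a k) (b k) s then 1 else 0)"
  proof -
    have "{j. j < Suc k \<and> on_hyperplane n (a j) (b j) s} =
        Z \<union> (if on_hyperplane n (a k) (b k) s then {k} else {})"
      by (auto simp: Z_def less_Suc_eq)
    then show ?thesis by (simp add: card_Un_disjoint Z_def)
  qed
  have "affine_prod_taylor n a b k s (\<alpha>(i := \<alpha> i - 1)) = 0" if "i < n" "\<alpha> i \<noteq> 0" for i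
  proof (rule Suc.IH)
    show "(\<Sum>i'<n. (\<alpha>(i := \<alpha> i - 1)) i') < card {j. j < k \<and> on_hyperplane n (a j) (b j) s}"
      using Suc.prems card_Suc Suc_sum_fun_upd_pred[of i n \<alpha>, OF that] unfolding Z_def
      by (auto split: if_splits)
  qed
  moreover have "((\<Sum>i<n. a k i * s i) - b k) * affine_prod_taylor n a b k s \<alpha> = 0"
    using Suc.IH Suc.prems card_Suc unfolding Z_def
    by (cases "on_hyperplane n (a k) (b k) s") (auto simp: on_hyperplane_def)
  ultimately show ?case by (auto intro!: sum.neutral)
qed simp

lemma affine_prod_taylor_eq_0_if_degree_less:
  "k < (\<Sum>i<n. \<alpha> i) \<Longrightarrow> affine_prod_taylor n a b k s \<alpha> = 0"
proof (induction k arbitrary: \<alpha>)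
  case 0
  then show ?case by (auto intro: ccontr)
next
  case (Suc k)
  then have "affine_prod_taylor n a b k s (\<alpha>(i := \<alpha> i - 1)) = 0" if "i < n" "\<alpha> i \<noteq> 0" for i
    using Suc_sum_fun_upd_pred[of i n \<alpha>, OF that] by simp
  then show ?case using Suc by (auto intro!: sum.neutral)
qed

lemma affine_prod_taylor_0_index:
  "(\<forall>i<n. \<alpha> i = 0) \<Longrightarrow> affine_prod_taylor n a b k s \<alpha> = (\<Prod>j<k. (\<Sum>i<n. a j i * s i) - b j)"
  by (induction k) auto

definition monom_taylor :: "nat \<Rightarrow> (nat \<Rightarrow> 'a::field) \<Rightarrow> (nat \<Rightarrow> nat) \<Rightarrow> (nat \<Rightarrow> nat) \<Rightarrow> 'a" where
  "monom_taylor n s e \<alpha> = (\<Prod>i<n. taylor_coeff (monom 1 (e i)) (s i) (\<alpha> i))"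

lemma monom_taylor_Suc:
  assumes "i < n"
  shows "monom_taylor n s (e(i := Suc (e i))) \<alpha> =
    (if \<alpha> i = 0 then 0 else monom_taylor n s e (\<alpha>(i := \<alpha> i - 1))) + s i * monom_taylor n s e \<alpha>"
proof -
  define R where "R = (\<Prod>i'\<in>{..<n} - {i}. taylor_coeff (monom 1 (e i')) (s i') (\<alpha> i'))"
  have split: "monom_taylor n s e' \<alpha>' = taylor_coeff (monom 1 (e' i)) (s i) (\<alpha>' i) * R"
    if "\<forall>i'\<in>{..<n} - {i}. e' i' = e i' \<and> \<alpha>' i' = \<alpha> i'" for e' \<alpha>'
  proof -
    have "(\<Prod>i'\<in>{..<n} - {i}. taylor_coeff (monom 1 (e' i')) (s i') (\<alpha>' i')) = R"
      unfolding R_def using that by (intro prod.cong) auto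
    then show ?thesis unfolding monom_taylor_def using assms by (subst prod.remove[of _ i]) auto
  qed
  show ?thesis
    by (simp add: split taylor_coeff_monom_Suc algebra_simps)
qed

lemma sum_PiE_shift:
  fixes g h :: "('i \<Rightarrow> nat) \<Rightarrow> 'a::semiring_0"
  assumes fin: "finite I" and i: "i \<in> I" and top: "\<And>e. e \<in> PiE I (\<lambda>_. {..K}) \<Longrightarrow> e i = K \<Longrightarrow> g e = 0"
  shows "(\<Sum>e\<in>PiE I (\<lambda>_. {..K}). if e i = 0 then 0 else g (e(i := e i - 1)) * h e) =
    (\<Sum>e\<in>PiE I (\<lambda>_. {..K}). g e * h (e(i := Suc (e i))))"
proof -
  define E where "E = PiE I (\<lambda>_. {..K})"
  have "finite E" unfolding E_def using fin by (simp add: finite_PiE)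
  have "(\<Sum>e\<in>E. if e i = 0 then 0 else g (e(i := e i - 1)) * h e) =
      (\<Sum>e\<in>E. if e i \<noteq> 0 then g (e(i := e i - 1)) * h e else 0)"
    by (intro sum.cong) auto
  also have "\<dots> = (\<Sum>e\<in>{e\<in>E. e i \<noteq> 0}. g (e(i := e i - 1)) * h e)"
    using \<open>finite E\<close> by (rule sum.inter_filter[symmetric])
  also have "\<dots> = (\<Sum>e\<in>{e\<in>E. e i < K}. g e * h (e(i := Suc (e i))))"
    by (rule sum.reindex_bij_witness[of _ "\<lambda>e. e(i := Suc (e i))" "\<lambda>e. e(i := e i - 1)"])
       (use i in \<open>auto simp: E_def PiE_def extensional_def Pi_def\<close>)
  also have "\<dots> = (\<Sum>e\<in>E. g e * h (e(i := Suc (e i))))"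
  proof (rule sum.mono_neutral_left[OF \<open>finite E\<close>])
    show "\<forall>e\<in>E - {e \<in> E. e i < K}. g e * h (e(i := Suc (e i))) = 0"
    proof
      fix e assume "e \<in> E - {e \<in> E. e i < K}"
      moreover from this have "e i = K" using i by (auto simp: E_def PiE_def Pi_def)
      ultimately show "g e * h (e(i := Suc (e i))) = 0" using top unfolding E_def by simp
    qed
  qed auto
  finally show ?thesis unfolding E_def .
qed

text \<open>Multiplication by \<open>x\<^sub>i = s\<^sub>i + (x\<^sub>i - s\<^sub>i)\<close>, read off in Taylor coefficients at \<open>s\<close>.\<close>

lemma sum_shift_monom_taylor:
  fixes q :: "(nat \<Rightarrow> nat) \<Rightarrow> 'a::field"
  assumes i: "i < n" and top: "\<And>e. e \<in> PiE {..<n} (\<lambda>_. {..K}) \<Longrightarrow> e i = K \<Longrightarrow> q e = 0"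
  shows "(\<Sum>e\<in>PiE {..<n} (\<lambda>_. {..K}). if e i = 0 then 0 else q (e(i := e i - 1)) * monom_taylor n s e \<alpha>) =
    (if \<alpha> i = 0 then 0 else (\<Sum>e\<in>PiE {..<n} (\<lambda>_. {..K}). q e * monom_taylor n s e (\<alpha>(i := \<alpha> i - 1)))) +
    s i * (\<Sum>e\<in>PiE {..<n} (\<lambda>_. {..K}). q e * monom_taylor n s e \<alpha>)"
proof -
  have "(\<Sum>e\<in>PiE {..<n} (\<lambda>_. {..K}). if e i = 0 then 0 else q (e(i := e i - 1)) * monom_taylor n s e \<alpha>) =
      (\<Sum>e\<in>PiE {..<n} (\<lambda>_. {..K}). q e * monom_taylor n s (e(i := Suc (e i))) \<alpha>)"
    using sum_PiE_shift[of "{..<n}" i K q "\<lambda>e. monom_taylor n s e \<alpha>"] i top by simp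
  then show ?thesis
    by (simp add: monom_taylor_Suc[OF i] algebra_simps sum.distrib sum_distrib_left)
qed

lemma affine_prod_taylor_expansion:
  assumes "k \<le> K"
  shows "affine_prod_taylor n a b k s \<alpha> =
    (\<Sum>e\<in>PiE {..<n} (\<lambda>_. {..K}). affine_prod_taylor n a b k (\<lambda>_. 0) e * monom_taylor n s e \<alpha>)"
  using assms
proof (induction k arbitrary: \<alpha>)
  case 0
  define z where "z = (\<lambda>i\<in>{..<n}. 0::nat)"
  have "(\<Sum>e\<in>PiE {..<n} (\<lambda>_. {..K}). affine_prod_taylor n a b 0 (\<lambda>_. 0) e * monom_taylor n s e \<alpha>) =
      (\<Sum>e\<in>PiE {..<n} (\<lambda>_. {..K}). if e = z then monom_taylor n s z \<alpha> else 0)"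
  proof (intro sum.cong refl)
    fix e assume "e \<in> PiE {..<n} (\<lambda>_. {..K})"
    then have "(\<forall>i<n. e i = 0) \<longleftrightarrow> e = z"
      by (auto simp: z_def PiE_def extensional_def fun_eq_iff)
    then show "affine_prod_taylor n a b 0 (\<lambda>_. 0) e * monom_taylor n s e \<alpha> =
        (if e = z then monom_taylor n s z \<alpha> else 0)"
      by auto
  qed
  also have "\<dots> = monom_taylor n s z \<alpha>"
    by (simp add: z_def finite_PiE)
  also have "\<dots> = affine_prod_taylor n a b 0 s \<alpha>"
    by (auto simp: monom_taylor_def z_def taylor_coeff_1 intro: prod_zero)
  finally show ?case ..
next
  case (Suc k)
  define E where "E = PiE {..<n} (\<lambda>_::nat. {..K})"
  define P where "P = affine_prod_taylor n a b k (\<lambda>_. 0)"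
  define L where "L \<alpha>' = (\<Sum>e\<in>E. P e * monom_taylor n s e \<alpha>')" for \<alpha>'
  have IH: "affine_prod_taylor n a b k s \<alpha>' = L \<alpha>'" for \<alpha>'
    using Suc unfolding L_def E_def P_def by simp
  have top: "P e = 0" if "e \<in> E" "i < n" "e i = K" for e i
  proof -
    have "e i \<le> (\<Sum>i'<n. e i')" using that by (intro member_le_sum) auto
    then show ?thesis unfolding P_def using that Suc.prems by (intro affine_prod_taylor_eq_0_if_degree_less) simp
  qed
  have step: "affine_prod_taylor n a b (Suc k) (\<lambda>_. 0) e * monom_taylor n s e \<alpha> =
      - b k * (P e * monom_taylor n s e \<alpha>) +
      (\<Sum>i<n. a k i * (if e i = 0 then 0 else P (e(i := e i - 1)) * monom_taylor n s e \<alpha>))" for e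
    unfolding P_def by (simp add: algebra_simps sum_distrib_left) (auto intro!: sum.cong)
  have "(\<Sum>e\<in>E. affine_prod_taylor n a b (Suc k) (\<lambda>_. 0) e * monom_taylor n s e \<alpha>) =
      - b k * L \<alpha> + (\<Sum>i<n. a k i *
        (\<Sum>e\<in>E. if e i = 0 then 0 else P (e(i := e i - 1)) * monom_taylor n s e \<alpha>))"
    unfolding L_def sum_distrib_left by (simp only: step sum.distrib sum.swap[of _ E])
  also have "\<dots> = - b k * L \<alpha> + (\<Sum>i<n. a k i *
      ((if \<alpha> i = 0 then 0 else L (\<alpha>(i := \<alpha> i - 1))) + s i * L \<alpha>))"
    using top unfolding L_def E_def by (simp add: sum_shift_monom_taylor)
  also have "\<dots> = affine_prod_taylor n a b (Suc k) s \<alpha>"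
  proof -
    have "(\<Sum>i<n. a k i * ((if \<alpha> i = 0 then 0 else L (\<alpha>(i := \<alpha> i - 1))) + s i * L \<alpha>)) =
        (\<Sum>i<n. if \<alpha> i = 0 then 0 else a k i * L (\<alpha>(i := \<alpha> i - 1))) + (\<Sum>i<n. a k i * s i) * L \<alpha>"
      unfolding distrib_left sum.distrib sum_distrib_right
      by (intro arg_cong2[where f = "(+)"] sum.cong) (auto simp: mult_ac)
    then show ?thesis by (simp only: affine_prod_taylor.simps IH) (simp add: algebra_simps)
  qed
  finally show ?case unfolding E_def ..
qed

section \<open>Pairing a product functional with Hermite data on a grid\<close>

lemma int_sum_diff_1:
  assumes "\<And>i. i \<in> A \<Longrightarrow> 1 \<le> f i"
  shows "int (\<Sum>i\<in>A. f i - 1) = int (\<Sum>i\<in>A. f i) - int (card A)"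
proof -
  have "int (\<Sum>i\<in>A. f i - 1) = (\<Sum>i\<in>A. int (f i) - 1)"
    unfolding of_nat_sum using assms by (intro sum.cong refl) (simp add: of_nat_diff)
  then show ?thesis by (simp add: sum_subtractf of_nat_sum)
qed

lemma sum_PiE_dependent_prod:
  fixes f :: "'i \<Rightarrow> 'x \<Rightarrow> 'y \<Rightarrow> 'c::comm_semiring_1"
  assumes "finite I" "\<And>i. i \<in> I \<Longrightarrow> finite (S i)" "\<And>i t. i \<in> I \<Longrightarrow> t \<in> S i \<Longrightarrow> finite (M i t)"
  shows "(\<Sum>s\<in>PiE I S. \<Sum>\<alpha>\<in>PiE I (\<lambda>i. M i (s i)). \<Prod>i\<in>I. f i (s i) (\<alpha> i)) =
    (\<Prod>i\<in>I. \<Sum>t\<in>S i. \<Sum>j\<in>M i t. f i t j)"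
proof -
  have "(\<Prod>i\<in>I. \<Sum>t\<in>S i. \<Sum>j\<in>M i t. f i t j) = (\<Prod>i\<in>I. \<Sum>p\<in>Sigma (S i) (M i). f i (fst p) (snd p))"
    using assms by (intro prod.cong refl) (simp add: sum.Sigma split_beta)
  also have "\<dots> = (\<Sum>g\<in>PiE I (\<lambda>i. Sigma (S i) (M i)). \<Prod>i\<in>I. f i (fst (g i)) (snd (g i)))"
    using assms by (intro prod_sum_PiE) auto
  also have "\<dots> = (\<Sum>(s, \<alpha>)\<in>Sigma (PiE I S) (\<lambda>s. PiE I (\<lambda>i. M i (s i))). \<Prod>i\<in>I. f i (s i) (\<alpha> i))"
    by (rule sum.reindex_bij_witness[of _ "\<lambda>(s, \<alpha>). \<lambda>i\<in>I. (s i, \<alpha> i)"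
          "\<lambda>g. (\<lambda>i\<in>I. fst (g i), \<lambda>i\<in>I. snd (g i))"])
      (auto simp: PiE_def extensional_def Pi_def fun_eq_iff)
  also have "\<dots> = (\<Sum>s\<in>PiE I S. \<Sum>\<alpha>\<in>PiE I (\<lambda>i. M i (s i)). \<Prod>i\<in>I. f i (s i) (\<alpha> i))"
    using assms by (subst sum.Sigma[symmetric]) (auto intro!: finite_PiE)
  finally show ?thesis ..
qed

definition grid_pairing ::
  "nat \<Rightarrow> (nat \<Rightarrow> 'a set) \<Rightarrow> (nat \<Rightarrow> 'a \<Rightarrow> nat) \<Rightarrow> (nat \<Rightarrow> 'a \<Rightarrow> nat \<Rightarrow> 'a) \<Rightarrow>
    ((nat \<Rightarrow> 'a) \<Rightarrow> (nat \<Rightarrow> nat) \<Rightarrow> 'a) \<Rightarrow> 'a::field" where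
  "grid_pairing n S m c D =
    (\<Sum>s\<in>PiE {..<n} S. \<Sum>\<alpha>\<in>PiE {..<n} (\<lambda>i. {..<m i (s i)}). (\<Prod>i<n. c i (s i) (\<alpha> i)) * D s \<alpha>)"

lemma grid_pairing_affine_prod_eq_origin_value:
  assumes fin: "\<And>i. i < n \<Longrightarrow> finite (S i)"
    and zero_in: "\<And>i. i < n \<Longrightarrow> 0 \<in> S i"
    and mult_zero: "\<And>i. i < n \<Longrightarrow> m i 0 = 1"
    and cover: "\<And>s. s \<in> PiE {..<n} S - {restrict (\<lambda>_. 0) {..<n}} \<Longrightarrow>
      (\<Sum>i<n. m i (s i)) < card {j. j < k \<and> on_hyperplane n (a j) (b j) s} + n"
  shows "grid_pairing n S m c (affine_prod_taylor n a b k) = (\<Prod>i<n. c i 0 0) * (\<Prod>j<k. - b j)"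
proof -
  define z where "z = restrict (\<lambda>_. 0::'a) {..<n}"
  define box where "box s = PiE {..<n} (\<lambda>i. {..<m i (s i)})" for s
  define F where "F s = (\<Sum>\<alpha>\<in>box s. (\<Prod>i<n. c i (s i) (\<alpha> i)) * affine_prod_taylor n a b k s \<alpha>)" for s
  have "F s = 0" if s: "s \<in> PiE {..<n} S - {z}" for s
  proof -
    have "affine_prod_taylor n a b k s \<alpha> = 0" if "\<alpha> \<in> box s" for \<alpha>
    proof (rule affine_prod_taylor_eq_0_if_on_hyperplanes)
      have "(\<Sum>i<n. \<alpha> i + 1) \<le> (\<Sum>i<n. m i (s i))"
        using that unfolding box_def by (intro sum_mono) (auto simp: PiE_def Pi_def Suc_le_eq)
      moreover have "(\<Sum>i<n. \<alpha> i + 1) = (\<Sum>i<n. \<alpha> i) + n"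
        by (simp only: sum.distrib) simp
      ultimately have "(\<Sum>i<n. \<alpha> i) + n \<le> (\<Sum>i<n. m i (s i))" by simp
      then show "(\<Sum>i<n. \<alpha> i) < card {j. j < k \<and> on_hyperplane n (a j) (b j) s}"
        using cover[OF s[unfolded z_def]] by linarith
    qed
    then show ?thesis unfolding F_def by simp
  qed
  moreover have "z \<in> PiE {..<n} S" unfolding z_def using zero_in by auto
  ultimately have "grid_pairing n S m c (affine_prod_taylor n a b k) = F z"
    unfolding grid_pairing_def F_def[symmetric] box_def[symmetric] using fin
    by (subst sum.remove[of _ z]) (auto intro!: finite_PiE sum.neutral)
  also have "box z = {restrict (\<lambda>_. 0) {..<n}}"
    unfolding box_def z_def using mult_zero by (auto simp: PiE_def Pi_def extensional_def fun_eq_iff)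
  then have "F z = (\<Prod>i<n. c i 0 0) * (\<Prod>j<k. - b j)"
    unfolding F_def by (simp add: affine_prod_taylor_0_index z_def)
  finally show ?thesis .
qed

lemma grid_pairing_affine_prod_eq_0:
  assumes fin: "\<And>i. i < n \<Longrightarrow> finite (S i)"
    and annihilates: "\<And>i. i < n \<Longrightarrow> annihilates_degree_below (S i) (m i) (c i) (d i - 1)"
    and deg: "k < (\<Sum>i<n. d i - 1)"
  shows "grid_pairing n S m c (affine_prod_taylor n a b k) = 0"
proof -
  define E where "E = PiE {..<n} (\<lambda>_::nat. {..k})"
  define P where "P = affine_prod_taylor n a b k (\<lambda>_. 0)"
  have "grid_pairing n S m c (affine_prod_taylor n a b k) =
      (\<Sum>e\<in>E. P e * (\<Prod>i<n. \<Sum>t\<in>S i. \<Sum>j<m i t. c i t j * taylor_coeff (monom 1 (e i)) t j))"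
  proof -
    define C where "C s \<alpha> = (\<Prod>i<n. c i (s i) (\<alpha> i))" for s \<alpha>
    define box where "box s = PiE {..<n} (\<lambda>i. {..<m i (s i)})" for s
    have "grid_pairing n S m c (affine_prod_taylor n a b k) =
        (\<Sum>s\<in>PiE {..<n} S. \<Sum>\<alpha>\<in>box s. \<Sum>e\<in>E. P e * (C s \<alpha> * monom_taylor n s e \<alpha>))"
      unfolding grid_pairing_def E_def P_def C_def box_def
      by (simp add: affine_prod_taylor_expansion[of k k] sum_distrib_left mult_ac)
    also have "\<dots> = (\<Sum>e\<in>E. \<Sum>s\<in>PiE {..<n} S. \<Sum>\<alpha>\<in>box s. P e * (C s \<alpha> * monom_taylor n s e \<alpha>))"
      by (subst sum.swap) (simp only: sum.swap[of _ "box _"])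
    also have "\<dots> = (\<Sum>e\<in>E. P e * (\<Sum>s\<in>PiE {..<n} S. \<Sum>\<alpha>\<in>PiE {..<n} (\<lambda>i. {..<m i (s i)}).
          \<Prod>i<n. c i (s i) (\<alpha> i) * taylor_coeff (monom 1 (e i)) (s i) (\<alpha> i)))"
      unfolding C_def box_def monom_taylor_def by (simp add: sum_distrib_left prod.distrib)
    also have "\<dots> = (\<Sum>e\<in>E. P e * (\<Prod>i<n. \<Sum>t\<in>S i. \<Sum>j<m i t. c i t j * taylor_coeff (monom 1 (e i)) t j))"
    proof (intro sum.cong refl arg_cong2[where f = "(*)"])
      fix e
      show "(\<Sum>s\<in>PiE {..<n} S. \<Sum>\<alpha>\<in>PiE {..<n} (\<lambda>i. {..<m i (s i)}).
          \<Prod>i<n. c i (s i) (\<alpha> i) * taylor_coeff (monom 1 (e i)) (s i) (\<alpha> i)) =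
        (\<Prod>i<n. \<Sum>t\<in>S i. \<Sum>j<m i t. c i t j * taylor_coeff (monom 1 (e i)) t j)"
        using fin by (intro sum_PiE_dependent_prod) auto
    qed
    finally show ?thesis .
  qed
  also have "\<dots> = 0"
  proof (intro sum.neutral ballI)
    fix e assume "e \<in> E"
    show "P e * (\<Prod>i<n. \<Sum>t\<in>S i. \<Sum>j<m i t. c i t j * taylor_coeff (monom 1 (e i)) t j) = 0"
    proof (cases "(\<Sum>i<n. e i) \<le> k")
      case True
      have "\<not> (\<forall>i<n. d i - 1 \<le> e i)"
      proof
        assume "\<forall>i<n. d i - 1 \<le> e i"
        then have "(\<Sum>i<n. d i - 1) \<le> (\<Sum>i<n. e i)" by (intro sum_mono) auto
        then show False using True deg by linarith
      qed
      then obtain i where "i < n" "degree (monom (1::'a) (e i)) < d i - 1"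
        by (auto simp: not_le degree_monom_eq)
      then have "(\<Prod>i<n. \<Sum>t\<in>S i. \<Sum>j<m i t. c i t j * taylor_coeff (monom 1 (e i)) t j) = 0"
        using annihilates by (intro prod_zero) (auto simp: annihilates_degree_below_def)
      then show ?thesis by simp
    next
      case False
      then show ?thesis unfolding P_def by (simp add: affine_prod_taylor_eq_0_if_degree_less)
    qed
  qed
  finally show ?thesis .
qed

theorem theorem5:
  fixes n k :: nat
    and S :: "nat \<Rightarrow> 'a::field set"
    and m :: "nat \<Rightarrow> 'a \<Rightarrow> nat"
    and a :: "nat \<Rightarrow> nat \<Rightarrow> 'a"
    and b :: "nat \<Rightarrow> 'a"
  assumes fin: "\<And>i. i < n \<Longrightarrow> finite (S i)"
    and zero_in: "\<And>i. i < n \<Longrightarrow> 0 \<in> S i"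
    and mult_pos: "\<And>i s. i < n \<Longrightarrow> s \<in> S i \<Longrightarrow> m i s \<ge> 1"
    and mult_zero: "\<And>i. i < n \<Longrightarrow> m i 0 = 1"
    and hyp: "\<And>j. j < k \<Longrightarrow> is_hyperplane n (a j)"
    and cover: "\<And>s. s \<in> (PiE {..<n} S) - {restrict (\<lambda>_. 0) {..<n}} \<Longrightarrow>
        int (card {j. j < k \<and> on_hyperplane n (a j) (b j) s})
          \<ge> int (\<Sum>i<n. m i (s i)) - int n + 1"
    and avoid: "\<And>j. j < k \<Longrightarrow> \<not> on_hyperplane n (a j) (b j) (restrict (\<lambda>_. 0) {..<n})"
  shows "int k \<ge> int (\<Sum>i<n. \<Sum>s\<in>S i. m i s) - int n"
proof (rule ccontr)
  assume neg: "\<not> ?thesis"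
  define d where "d i = (\<Sum>s\<in>S i. m i s)" for i
  have "1 \<le> d i" if "i < n" for i
    using fin[OF that] zero_in[OF that] mult_zero[OF that] by (simp add: d_def sum.remove[of _ 0])
  then have "int (\<Sum>i<n. d i - 1) = int (\<Sum>i<n. d i) - int (card {..<n})"
    by (intro int_sum_diff_1) simp
  then have deg: "k < (\<Sum>i<n. d i - 1)"
    using neg unfolding d_def card_lessThan by linarith
  have "\<exists>ci. ci 0 0 \<noteq> 0 \<and> annihilates_degree_below (S i) (m i) ci (d i - 1)" if "i < n" for i
    unfolding d_def using fin[OF that] zero_in[OF that] mult_zero[OF that] by (rule hermite_functional_exists)
  then obtain c where c0: "\<And>i. i < n \<Longrightarrow> c i 0 0 \<noteq> 0"
    and annihilates: "\<And>i. i < n \<Longrightarrow> annihilates_degree_below (S i) (m i) (c i) (d i - 1)"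
    by metis
  have "(\<Sum>i<n. m i (s i)) < card {j. j < k \<and> on_hyperplane n (a j) (b j) s} + n"
    if "s \<in> PiE {..<n} S - {restrict (\<lambda>_. 0) {..<n}}" for s
    using cover[OF that] by linarith
  then have "grid_pairing n S m c (affine_prod_taylor n a b k) = (\<Prod>i<n. c i 0 0) * (\<Prod>j<k. - b j)"
    using fin zero_in mult_zero by (intro grid_pairing_affine_prod_eq_origin_value)
  moreover have "grid_pairing n S m c (affine_prod_taylor n a b k) = 0"
    using fin annihilates deg by (rule grid_pairing_affine_prod_eq_0)
  moreover have "b j \<noteq> 0" if "j < k" for j
    using avoid[OF that] by (simp add: on_hyperplane_def)
  ultimately show False using c0 by simp
qed

end
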